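(* Let $M\ge 2$, $N\ge 1$, $L\ge1$ be integers, $P>0$, $\tau\in(0,1]$, $\alpha\in\mathbb{C}\setminus\{0\}$, $\sigma_R>0$, $c_3\in\mathbb{C}\setminus\{0\}$, and let $\mathbf{s}_u\in\mathbb{C}^{1\times L}$ be a known row vector with $\mathbf{s}_u\mathbf{s}_u^H=L$. For $\theta\in(-\pi/2,\pi/2)$ consider the observation $\mathbf{Y}_r=\alpha c_3\sqrt{N}\sqrt{P\tau}\,\mathbf{b}(\theta)\mathbf{s}_u+\mathbf{Z}_r\in\mathbb{C}^{M\times L}$, where the entries of $\mathbf{Z}_r$ are i.i.d. $\mathcal{CN}(0,\sigma_R^2)$, and the unknown real parameter vector $\xi=[\theta,\mathrm{Re}(c_3),\mathrm{Im}(c_3)]^T$. Let $\mathbf{u}(\xi)=\mathrm{vec}(\alpha c_3\sqrt{N}\sqrt{P\tau}\,\mathbf{b}(\theta)\mathbf{s}_u)$, let $\mathbf{F}\in\mathbb{R}^{3\times3}$ be the Fisher information matrix $\mathbf{F}_{i,j}=\frac{2}{\sigma_R^2}\mathrm{Re}\left\{\frac{\partial\mathbf{u}^H}{\partial\xi_i}\frac{\partial\mathbf{u}}{\partial\xi_j}\right\}$, and let $\mathrm{CRB}(\theta)=[\mathbf{F}^{-1}]_{1,1}$. Then $$\mathrm{CRB}(\theta)=\frac{6\sigma_R^2}{L|c_3|^2P\tau N|\alpha|^2\pi^2\cos^2(\theta)M(M^2-1)}.$$ Consequently, if $\theta\sim\mathcal{U}(-\pi/2,\pi/2)$, then for every $\epsilon>0$,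 with $x_\epsilon=\sqrt{6}\,\sigma_R\left(\epsilon L|c_3|^2P\tau N|\alpha|^2\pi^2M(M^2-1)\right)^{-1/2}$, we have $P(\mathrm{CRB}(\theta)>\epsilon)=\frac{2}{\pi}\sin^{-1}(x_\epsilon)$ if $x_\epsilon<1$, and $P(\mathrm{CRB}(\theta)>\epsilon)=1$ otherwise.
   Context: $\mathbf{b}(\theta)\in\mathbb{C}^M$ is the steering vector with $m$-th entry $e^{-j\pi\sin(\theta)\frac{M-(2m-1)}{2}}$, $m=1,\dots,M$. $\mathrm{vec}$ denotes column-stacking vectorization. *)

theory Defs
  imports "HOL-Analysis.Analysis"
begin

text \<open>Steering vector b(theta) in C^M, entries indexed m = 1..M.\<close>
definition steer :: "nat \<Rightarrow> real \<Rightarrow> nat \<Rightarrow> complex" where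
  "steer M \<theta> m = cis (- (pi * sin \<theta> * (real M - (2 * real m - 1)) / 2))"

text \<open>Column-stacking vectorization of an M x L matrix Y (entries Y m l, 1-based);
  entry k (0-based, k < M*L) of vec Y.\<close>
definition vecM :: "nat \<Rightarrow> (nat \<Rightarrow> nat \<Rightarrow> complex) \<Rightarrow> nat \<Rightarrow> complex" where
  "vecM M Y k = Y (k mod M + 1) (k div M + 1)"

definition u_sig :: "nat \<Rightarrow> nat \<Rightarrow> real \<Rightarrow> real \<Rightarrow> complex \<Rightarrow> (nat \<Rightarrow> complex)
    \<Rightarrow> real^3 \<Rightarrow> nat \<Rightarrow> complex" where
  "u_sig M N P \<tau> \<alpha> s \<xi> =
     vecM M (\<lambda>m l. \<alpha> * Complex (\<xi>$1) (\<xi>$2) * complex_of_real (sqrt (real N) * sqrt (P * \<tau>))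
                      * steer M (\<xi>$0) m * s l)"

definition du :: "nat \<Rightarrow> nat \<Rightarrow> real \<Rightarrow> real \<Rightarrow> complex \<Rightarrow> (nat \<Rightarrow> complex)
    \<Rightarrow> real^3 \<Rightarrow> 3 \<Rightarrow> nat \<Rightarrow> complex" where
  "du M N P \<tau> \<alpha> s \<xi> i k =
     vector_derivative (\<lambda>t. u_sig M N P \<tau> \<alpha> s (\<chi> j. if j = i then t else \<xi>$j) k) (at (\<xi>$i))"

definition fisher :: "nat \<Rightarrow> nat \<Rightarrow> nat \<Rightarrow> real \<Rightarrow> real \<Rightarrow> complex \<Rightarrow> (nat \<Rightarrow> complex)
    \<Rightarrow> real \<Rightarrow> real^3 \<Rightarrow> real^3^3" where
  "fisher M N L P \<tau> \<alpha> s \<sigma> \<xi> = (\<chi> i j. 2 / \<sigma>\<^sup>2 *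
     Re (\<Sum>k<M * L. cnj (du M N P \<tau> \<alpha> s \<xi> i k) * du M N P \<tau> \<alpha> s \<xi> j k))"

definition CRB :: "nat \<Rightarrow> nat \<Rightarrow> nat \<Rightarrow> real \<Rightarrow> real \<Rightarrow> complex \<Rightarrow> (nat \<Rightarrow> complex)
    \<Rightarrow> real \<Rightarrow> complex \<Rightarrow> real \<Rightarrow> real" where
  "CRB M N L P \<tau> \<alpha> s \<sigma> c3 \<theta> =
     matrix_inv (fisher M N L P \<tau> \<alpha> s \<sigma> (\<chi> i. if i = 0 then \<theta> else if i = 1 then Re c3 else Im c3)) $ 0 $ 0"

end

theory Submission
  imports Defs
begin

text \<open>
  Differentiating the noise-free signal with respect to \<theta>, Re c3 and Im c3 reproduces its
  entries (amplitude, unit-modulus steering phase, pilot symbol) multiplied by the profiles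
  -i \<pi> c3 cos \<theta> d_m / 2, 1 and i, where d_m = M - 1 - 2m is the centred antenna index.
  Since the steering entries have modulus one and the pilot has energy L, the Fisher matrix is a
  multiple of the Gram matrix of these three profiles. The identity \<Sum> d_m = 0 makes it diagonal,
  and \<Sum> d_m^2 = M(M^2 - 1)/3 gives the (\<theta>, \<theta>) entry, whose reciprocal is the CRB.
  For uniform \<theta> the event CRB(\<theta>) > \<epsilon> is cos \<theta> < x_\<epsilon>, i.e. |\<theta>| > arccos x_\<epsilon>, which has
  probability (\<pi> - 2 arccos x_\<epsilon>) / \<pi> = (2/\<pi>) arcsin x_\<epsilon>.
\<close>

lemma cis_sin_has_vector_derivative:
  "((\<lambda>t. cis (c * sin t)) has_vector_derivative (\<i> * of_real (c * cos t0) * cis (c * sin t0))) (at t0)"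
  unfolding has_vector_derivative_def
  by (auto intro!: derivative_eq_intros simp: scaleR_conv_of_real algebra_simps)

lemma steer_has_vector_derivative:
  "((\<lambda>t. steer M t m) has_vector_derivative
      (- \<i> * of_real (pi * cos t0 * (real M - (2 * real m - 1)) / 2) * steer M t0 m)) (at t0)"
proof -
  define c where "c = - (pi * (real M - (2 * real m - 1)) / 2)"
  have steer_eq: "steer M t m = cis (c * sin t)" for t
    unfolding steer_def c_def by (simp add: mult_ac)
  have "c * cos t0 = - (pi * cos t0 * (real M - (2 * real m - 1)) / 2)"
    unfolding c_def by (simp add: mult_ac)
  then show ?thesis
    using cis_sin_has_vector_derivative[of c t0] unfolding steer_eq by simp
qed

lemma num3_cases: "k = 0 \<or> k = 1 \<or> k = (2::3)"
proof -
  have "(3::3) = 0" by simp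
  then show ?thesis
    using exhaust_3[of k] by metis
qed

text \<open>With zero-based m, entry m + 1 of the steering vector has phase
  -\<pi> sin \<theta> centered_index M m / 2.\<close>
definition centered_index :: "nat \<Rightarrow> nat \<Rightarrow> real" where
  "centered_index M m = real M - 1 - 2 * real m"

definition du_profile :: "nat \<Rightarrow> real^3 \<Rightarrow> 3 \<Rightarrow> nat \<Rightarrow> complex" where
  "du_profile M \<xi> i m =
     (if i = 0 then - \<i> * Complex (\<xi>$1) (\<xi>$2) * of_real (pi * cos (\<xi>$0) / 2) * of_real (centered_index M m)
      else if i = 1 then 1 else \<i>)"

lemma du_eq_profile:
  "du M N P \<tau> \<alpha> s \<xi> i k = \<alpha> * of_real (sqrt (real N) * sqrt (P * \<tau>))
     * steer M (\<xi>$0) (k mod M + 1) * s (k div M + 1) * du_profile M \<xi> i (k mod M)"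
proof -
  let ?a = "\<alpha> * of_real (sqrt (real N) * sqrt (P * \<tau>))"
  let ?st = "\<lambda>t. steer M t (k mod M + 1)" and ?s = "s (k div M + 1)"
  consider "i = 0" | "i = 1" | "i = 2"
    using num3_cases by blast
  then show ?thesis
  proof cases
    case 1
    have "(\<lambda>t. u_sig M N P \<tau> \<alpha> s (\<chi> j. if j = i then t else \<xi>$j) k)
        = (\<lambda>t. ?a * Complex (\<xi>$1) (\<xi>$2) * ?s * ?st t)"
      using 1 by (auto simp: u_sig_def vecM_def)
    moreover have "((\<lambda>t. ?a * Complex (\<xi>$1) (\<xi>$2) * ?s * ?st t) has_vector_derivative
        ?a * Complex (\<xi>$1) (\<xi>$2) * ?s
          * (- \<i> * of_real (pi * cos (\<xi>$0) * centered_index M (k mod M) / 2) * ?st (\<xi>$0)))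
        (at (\<xi>$i))"
      using 1 steer_has_vector_derivative[of M "k mod M + 1" "\<xi>$0"]
      by (intro has_vector_derivative_mult_right) (simp add: centered_index_def algebra_simps)
    ultimately show ?thesis
      using 1 unfolding du_def by (simp add: vector_derivative_at du_profile_def algebra_simps)
  next
    case 2
    have "(\<lambda>t. u_sig M N P \<tau> \<alpha> s (\<chi> j. if j = i then t else \<xi>$j) k)
        = (\<lambda>t. (of_real t + \<i> * of_real (\<xi>$2)) * (?a * ?st (\<xi>$0) * ?s))"
      using 2 by (auto simp: u_sig_def vecM_def Complex_eq algebra_simps)
    moreover have "((\<lambda>t. (of_real t + \<i> * of_real (\<xi>$2)) * (?a * ?st (\<xi>$0) * ?s)) has_vector_derivative
        ?a * ?st (\<xi>$0) * ?s) (at (\<xi>$i))"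
      by (rule derivative_eq_intros refl)+ simp
    ultimately show ?thesis
      using 2 unfolding du_def by (simp add: vector_derivative_at du_profile_def)
  next
    case 3
    have "(\<lambda>t. u_sig M N P \<tau> \<alpha> s (\<chi> j. if j = i then t else \<xi>$j) k)
        = (\<lambda>t. (of_real (\<xi>$1) + \<i> * of_real t) * (?a * ?st (\<xi>$0) * ?s))"
      using 3 by (auto simp: u_sig_def vecM_def Complex_eq algebra_simps)
    moreover have "((\<lambda>t. (of_real (\<xi>$1) + \<i> * of_real t) * (?a * ?st (\<xi>$0) * ?s)) has_vector_derivative
        \<i> * (?a * ?st (\<xi>$0) * ?s)) (at (\<xi>$i))"
      by (rule derivative_eq_intros refl)+ simp
    ultimately show ?thesis
      using 3 unfolding du_def by (simp add: vector_derivative_at du_profile_def algebra_simps)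
  qed
qed

lemma sum_lessThan_mult_mod_div:
  fixes f :: "nat \<Rightarrow> nat \<Rightarrow> 'a::comm_monoid_add"
  shows "(\<Sum>k<M * L. f (k mod M) (k div M)) = (\<Sum>l<L. \<Sum>m<M. f m l)"
  unfolding mult.commute[of M L] sum_mult_product by (auto intro!: sum.cong)

lemma cnj_steer_mult_steer: "cnj (steer M t m) * steer M t m = 1"
  by (simp add: steer_def cis_cnj cis_mult)

lemma fisher_eq_gram:
  assumes energy: "(\<Sum>l=1..L. s l * cnj (s l)) = of_nat L" and "0 \<le> P * \<tau>"
  shows "fisher M N L P \<tau> \<alpha> s \<sigma> \<xi> $ i $ j = 2 / \<sigma>\<^sup>2 * ((cmod \<alpha>)\<^sup>2 * real N * P * \<tau> * real L)
     * Re (\<Sum>m<M. cnj (du_profile M \<xi> i m) * du_profile M \<xi> j m)"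
proof -
  let ?G = "\<Sum>m<M. cnj (du_profile M \<xi> i m) * du_profile M \<xi> j m"
  let ?C = "of_real ((cmod \<alpha>)\<^sup>2 * real N * P * \<tau>) :: complex"
  have "sqrt (real N) * sqrt (P * \<tau>) * (sqrt (real N) * sqrt (P * \<tau>)) = real N * (P * \<tau>)"
    using assms(2) by (simp add: real_sqrt_mult[symmetric])
  then have amplitude: "cnj (of_real (sqrt (real N) * sqrt (P * \<tau>))) * of_real (sqrt (real N) * sqrt (P * \<tau>))
      = (of_real (real N * P * \<tau>) :: complex)"
    by (simp flip: of_real_mult add: mult_ac)
  have summand: "cnj (du M N P \<tau> \<alpha> s \<xi> i k) * du M N P \<tau> \<alpha> s \<xi> j k =
      ?C * (s (k div M + 1) * cnj (s (k div M + 1)))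
      * (cnj (du_profile M \<xi> i (k mod M)) * du_profile M \<xi> j (k mod M))" for k
  proof -
    have "cnj (du M N P \<tau> \<alpha> s \<xi> i k) * du M N P \<tau> \<alpha> s \<xi> j k =
      (\<alpha> * cnj \<alpha>) * (cnj (of_real (sqrt (real N) * sqrt (P * \<tau>))) * of_real (sqrt (real N) * sqrt (P * \<tau>)))
      * (cnj (steer M (\<xi>$0) (k mod M + 1)) * steer M (\<xi>$0) (k mod M + 1))
      * (s (k div M + 1) * cnj (s (k div M + 1)))
      * (cnj (du_profile M \<xi> i (k mod M)) * du_profile M \<xi> j (k mod M))"
      unfolding du_eq_profile complex_cnj_mult by (simp only: mult_ac)
    then show ?thesis
      unfolding amplitude cnj_steer_mult_steer complex_norm_square[symmetric]
      by (simp only: mult_1_left mult_1_right of_real_mult mult_ac)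
  qed
  have "(\<Sum>k<M * L. cnj (du M N P \<tau> \<alpha> s \<xi> i k) * du M N P \<tau> \<alpha> s \<xi> j k)
      = (\<Sum>l<L. \<Sum>m<M. ?C * (s (l + 1) * cnj (s (l + 1))) * (cnj (du_profile M \<xi> i m) * du_profile M \<xi> j m))"
    unfolding summand by (rule sum_lessThan_mult_mod_div)
  also have "\<dots> = ?C * ((\<Sum>l<L. s (l + 1) * cnj (s (l + 1))) * ?G)"
    unfolding sum_product by (simp only: sum_distrib_left mult.assoc)
  also have "(\<Sum>l<L. s (l + 1) * cnj (s (l + 1))) = of_nat L"
    using energy by (simp add: sum.atLeast1_atMost_eq)
  finally have "(\<Sum>k<M * L. cnj (du M N P \<tau> \<alpha> s \<xi> i k) * du M N P \<tau> \<alpha> s \<xi> j k)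
      = of_real ((cmod \<alpha>)\<^sup>2 * real N * P * \<tau> * real L) * ?G"
    by simp
  moreover have "Re (of_real r * z) = r * Re z" for r z
    by simp
  ultimately show ?thesis
    unfolding fisher_def vec_lambda_beta by (simp only: mult.assoc)
qed

lemma sum_lessThan_affine: "(\<Sum>m<n. a - 2 * real m) = real n * a - real n * (real n - 1)"
  by (induction n) (simp_all add: algebra_simps)

lemma sum_lessThan_affine_sq:
  "(\<Sum>m<n. (a - 2 * real m)\<^sup>2)
     = real n * a\<^sup>2 - 2 * a * real n * (real n - 1) + 2 * (real n - 1) * real n * (2 * real n - 1) / 3"
proof (induction n)
  case (Suc n)
  then show ?case
    by (simp only: sum.lessThan_Suc Suc.IH of_nat_Suc) (simp add: field_simps power2_eq_square)
qed simp

lemma sum_centered_index: "(\<Sum>m<M. centered_index M m) = 0"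
  using sum_lessThan_affine[of "real M - 1" M] by (simp add: centered_index_def algebra_simps)

lemma sum_centered_index_sq: "(\<Sum>m<M. (centered_index M m)\<^sup>2) = real M * ((real M)\<^sup>2 - 1) / 3"
  using sum_lessThan_affine_sq[of "real M - 1" M] by (simp add: centered_index_def field_simps power2_eq_square)

lemma du_profile_gram:
  "Re (\<Sum>m<M. cnj (du_profile M \<xi> i m) * du_profile M \<xi> j m) =
     (if i \<noteq> j then 0
      else if i = 0 then (cmod (Complex (\<xi>$1) (\<xi>$2)))\<^sup>2 * (pi * cos (\<xi>$0) / 2)\<^sup>2 * (real M * ((real M)\<^sup>2 - 1) / 3)
      else real M)"
proof -
  let ?c = "- \<i> * Complex (\<xi>$1) (\<xi>$2) * of_real (pi * cos (\<xi>$0) / 2)"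
  define w :: "3 \<Rightarrow> complex" where "w k = (if k = 0 then ?c else if k = 1 then 1 else \<i>)" for k
  define e :: "3 \<Rightarrow> nat \<Rightarrow> real" where "e k m = (if k = 0 then centered_index M m else 1)" for k m
  have "du_profile M \<xi> k m = w k * of_real (e k m)" for k m
    by (simp add: du_profile_def w_def e_def)
  then have gram_sum: "(\<Sum>m<M. cnj (du_profile M \<xi> i m) * du_profile M \<xi> j m)
      = cnj (w i) * w j * of_real (\<Sum>m<M. e i m * e j m)"
    by (simp add: of_real_sum sum_distrib_left mult_ac)
  define g where "g k l = Re (cnj (w k) * w l)" for k l
  have gram: "Re (\<Sum>m<M. cnj (du_profile M \<xi> i m) * du_profile M \<xi> j m)
      = g i j * (\<Sum>m<M. e i m * e j m)"
    using gram_sum by (simp add: g_def)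
  have g00: "g 0 0 = (cmod (Complex (\<xi>$1) (\<xi>$2)))\<^sup>2 * (pi * cos (\<xi>$0) / 2)\<^sup>2"
  proof -
    have "(cmod ?c)\<^sup>2 = (cmod (Complex (\<xi>$1) (\<xi>$2)))\<^sup>2 * (pi * cos (\<xi>$0) / 2)\<^sup>2"
      by (simp add: norm_mult power_mult_distrib power_divide)
    moreover have "cnj ?c * ?c = of_real ((cmod ?c)\<^sup>2)"
      by (subst complex_norm_square) (rule mult.commute)
    ultimately show ?thesis
      unfolding g_def w_def by simp
  qed
  have gkk: "g k k = 1" if "k \<noteq> 0" for k
    using that by (simp add: g_def w_def)
  have g12: "g 1 2 = 0" "g 2 1 = 0"
    by (simp_all add: g_def w_def)
  have e00: "(\<Sum>m<M. e 0 m * e 0 m) = real M * ((real M)\<^sup>2 - 1) / 3"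
    using sum_centered_index_sq by (simp add: e_def power2_eq_square)
  have e0k: "(\<Sum>m<M. e 0 m * e k m) = 0" "(\<Sum>m<M. e k m * e 0 m) = 0" if "k \<noteq> 0" for k
    using that sum_centered_index by (simp_all add: e_def)
  have ekk: "(\<Sum>m<M. e k m * e k m) = real M" if "k \<noteq> 0" for k
    using that by (simp add: e_def)
  show ?thesis
    unfolding gram using num3_cases[of i] num3_cases[of j]
    by (elim disjE) (simp_all add: g00 gkk g12 e00 e0k ekk)
qed

lemma one_less_real_square: "2 \<le> M \<Longrightarrow> 1 < (real M)\<^sup>2"
  using power_strict_mono[of 1 "real M" 2] by simp

lemma matrix_inv_eqI:
  fixes A B :: "'a::semiring_1^'n^'n"
  assumes "A ** B = mat 1" and "B ** A = mat 1"
  shows "matrix_inv A = B"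
proof -
  have "matrix_inv A ** A = mat 1"
    unfolding matrix_inv_def by (rule someI2[of _ B]) (use assms in auto)
  have "matrix_inv A = matrix_inv A ** (A ** B)"
    using assms(1) by (simp add: matrix_mul_rid)
  also have "\<dots> = B"
    using \<open>matrix_inv A ** A = mat 1\<close> by (simp add: matrix_mul_assoc matrix_mul_lid)
  finally show ?thesis .
qed

lemma matrix_inv_diagonal:
  fixes A :: "'a::field^'n^'n"
  assumes "\<And>i j. A $ i $ j = (if i = j then f i else 0)" and "\<And>i. f i \<noteq> 0"
  shows "matrix_inv A = (\<chi> i j. if i = j then inverse (f i) else 0)"
  using assms
  by (intro matrix_inv_eqI)
     (auto simp: matrix_matrix_mult_def mat_def vec_eq_iff if_distrib if_distribR sum.delta cong: if_cong)

lemma CRB_eq: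
  assumes "M \<ge> 2" and "N > 0" and "L > 0" and "P > 0" and "\<tau> > 0"
    and "\<alpha> \<noteq> 0" and "\<sigma> > 0" and "c3 \<noteq> 0" and "cos \<theta> \<noteq> 0"
    and energy: "(\<Sum>l=1..L. s l * cnj (s l)) = of_nat L"
  shows "CRB M N L P \<tau> \<alpha> s \<sigma> c3 \<theta> =
           6 * \<sigma>\<^sup>2 / (real L * (cmod c3)\<^sup>2 * P * \<tau> * real N * (cmod \<alpha>)\<^sup>2 * pi\<^sup>2
              * (cos \<theta>)\<^sup>2 * real M * ((real M)\<^sup>2 - 1))"
proof -
  define \<xi> :: "real^3" where "\<xi> = (\<chi> i. if i = 0 then \<theta> else if i = 1 then Re c3 else Im c3)"
  have \<xi>: "\<xi>$0 = \<theta>" "Complex (\<xi>$1) (\<xi>$2) = c3"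
    by (simp_all add: \<xi>_def)
  define K where "K = 2 / \<sigma>\<^sup>2 * ((cmod \<alpha>)\<^sup>2 * real N * P * \<tau> * real L)"
  define f :: "3 \<Rightarrow> real" where
    "f i = K * (if i = 0 then (cmod c3)\<^sup>2 * (pi * cos \<theta> / 2)\<^sup>2 * (real M * ((real M)\<^sup>2 - 1) / 3)
                else real M)" for i
  have M_sq: "(real M)\<^sup>2 - 1 \<noteq> 0"
    using one_less_real_square[OF assms(1)] by simp
  have "0 \<le> P * \<tau>"
    using assms(4,5) by simp
  have "fisher M N L P \<tau> \<alpha> s \<sigma> \<xi> $ i $ j = (if i = j then f i else 0)" for i j
    unfolding fisher_eq_gram[OF energy \<open>0 \<le> P * \<tau>\<close>] du_profile_gram \<xi> f_def K_def by simp
  moreover have "f i \<noteq> 0" for i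
    using assms M_sq unfolding f_def K_def by auto
  ultimately have "CRB M N L P \<tau> \<alpha> s \<sigma> c3 \<theta> = inverse (f 0)"
    unfolding CRB_def \<xi>_def[symmetric] by (simp add: matrix_inv_diagonal)
  also have "\<dots> = 6 * \<sigma>\<^sup>2 / (real L * (cmod c3)\<^sup>2 * P * \<tau> * real N * (cmod \<alpha>)\<^sup>2 * pi\<^sup>2
              * (cos \<theta>)\<^sup>2 * real M * ((real M)\<^sup>2 - 1))"
    using assms M_sq unfolding f_def K_def by (simp add: field_simps power_mult_distrib power_divide)
  finally show ?thesis .
qed

lemma cos_less_on_half_period:
  assumes "0 < x" and "x \<le> 1"
  shows "{\<theta> \<in> {-pi/2<..<pi/2}. cos \<theta> < x} = {-pi/2<..<- arccos x} \<union> {arccos x<..<pi/2}"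
proof -
  have "0 \<le> arccos x" and "arccos x \<le> pi/2" and "cos (arccos x) = x"
    using assms arccos_le_pi2[of x] by (simp_all add: arccos_lbound)
  moreover have "cos \<bar>\<theta>\<bar> < cos (arccos x) \<longleftrightarrow> arccos x < \<bar>\<theta>\<bar>" if "\<bar>\<theta>\<bar> < pi/2" for \<theta>
    using that \<open>0 \<le> arccos x\<close> \<open>arccos x \<le> pi/2\<close> by (intro cos_mono_less_eq) auto
  ultimately show ?thesis
    by (auto simp: abs_less_iff)
qed

lemma measure_uniform_cos_less:
  fixes x :: real
  assumes "0 < x"
  shows "measure (uniform_measure lborel {-pi/2<..<pi/2}) {\<theta> \<in> {-pi/2<..<pi/2}. cos \<theta> < x}
     = (if x < 1 then 2 / pi * arcsin x else 1)"
proof (cases "x \<le> 1")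
  case False
  then have "{\<theta> \<in> {-pi/2<..<pi/2}. cos \<theta> < x} = {-pi/2<..<pi/2}"
    by (auto intro: le_less_trans[OF cos_le_one])
  then show ?thesis
    using False by simp
next
  case True
  let ?a = "arccos x"
  have "0 \<le> ?a" "?a < pi/2"
    using assms True arccos_less_arccos[of 0 x] by (auto intro: arccos_lbound)
  then have "measure lborel ({-pi/2<..<- ?a} \<union> {?a<..<pi/2}) = pi - 2 * ?a"
    by (subst measure_Union) auto
  moreover have "{-pi/2<..<pi/2} \<inter> ({-pi/2<..<- ?a} \<union> {?a<..<pi/2}) = {-pi/2<..<- ?a} \<union> {?a<..<pi/2}"
    using \<open>0 \<le> ?a\<close> by auto
  ultimately have "measure (uniform_measure lborel {-pi/2<..<pi/2}) {\<theta> \<in> {-pi/2<..<pi/2}. cos \<theta> < x}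
      = (pi - 2 * ?a) / pi"
    unfolding cos_less_on_half_period[OF assms True] by (subst measure_uniform_measure) auto
  also have "\<dots> = 2 / pi * arcsin x"
    using arcsin_plus_arccos[of x] True assms by (simp add: field_simps)
  finally show ?thesis
    using True by auto
qed

lemma less_divide_square_iff:
  fixes y Q \<epsilon> b :: real
  assumes "0 < y" and "0 < Q" and "0 < \<epsilon>" and "0 \<le> b"
  shows "\<epsilon> < b\<^sup>2 / (Q * y\<^sup>2) \<longleftrightarrow> y < b / sqrt (\<epsilon> * Q)"
proof -
  have "\<epsilon> < b\<^sup>2 / (Q * y\<^sup>2) \<longleftrightarrow> y\<^sup>2 < (b / sqrt (\<epsilon> * Q))\<^sup>2"
    using assms by (simp add: field_simps power_divide)
  also have "\<dots> \<longleftrightarrow> y < b / sqrt (\<epsilon> * Q)"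
    using assms by (auto intro: power_strict_mono power_less_imp_less_base)
  finally show ?thesis .
qed

lemma measure_uniform_gt_inverse_cos_sq:
  fixes g :: "real \<Rightarrow> real"
  assumes "0 < b" and "0 < Q" and "0 < \<epsilon>"
    and g: "\<And>\<theta>. \<theta> \<in> {-pi/2<..<pi/2} \<Longrightarrow> g \<theta> = b\<^sup>2 / (Q * (cos \<theta>)\<^sup>2)"
  shows "measure (uniform_measure lborel {-pi/2<..<pi/2}) {\<theta> \<in> {-pi/2<..<pi/2}. g \<theta> > \<epsilon>}
     = (if b / sqrt (\<epsilon> * Q) < 1 then 2 / pi * arcsin (b / sqrt (\<epsilon> * Q)) else 1)"
proof -
  have "g \<theta> > \<epsilon> \<longleftrightarrow> cos \<theta> < b / sqrt (\<epsilon> * Q)" if "\<theta> \<in> {-pi/2<..<pi/2}" for \<theta>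
    using that assms cos_gt_zero_pi[of \<theta>] by (simp add: less_divide_square_iff)
  then have events: "{\<theta> \<in> {-pi/2<..<pi/2}. g \<theta> > \<epsilon>}
      = {\<theta> \<in> {-pi/2<..<pi/2}. cos \<theta> < b / sqrt (\<epsilon> * Q)}"
    by blast
  show ?thesis
    unfolding events by (rule measure_uniform_cos_less) (use assms in simp)
qed

theorem lemma6:
  fixes M N L :: nat and P \<tau> \<sigma> :: real and \<alpha> c3 :: complex and s :: "nat \<Rightarrow> complex"
  assumes "M \<ge> 2" and "N \<ge> 1" and "L \<ge> 1"
    and "P > 0" and "0 < \<tau>" and "\<tau> \<le> 1"
    and "\<alpha> \<noteq> 0" and "\<sigma> > 0" and "c3 \<noteq> 0"
    and "(\<Sum>l=1..L. s l * cnj (s l)) = of_nat L"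
  shows "(\<forall>\<theta> \<in> {-pi/2<..<pi/2}.
            CRB M N L P \<tau> \<alpha> s \<sigma> c3 \<theta> =
              6 * \<sigma>\<^sup>2 / (real L * (cmod c3)\<^sup>2 * P * \<tau> * real N * (cmod \<alpha>)\<^sup>2 * pi\<^sup>2
                 * (cos \<theta>)\<^sup>2 * real M * ((real M)\<^sup>2 - 1)))
       \<and> (\<forall>\<epsilon>>0. let x = sqrt 6 * \<sigma> / sqrt (\<epsilon> * real L * (cmod c3)\<^sup>2 * P * \<tau> * real N
                        * (cmod \<alpha>)\<^sup>2 * pi\<^sup>2 * real M * ((real M)\<^sup>2 - 1)) in
            measure (uniform_measure lborel {-pi/2<..<pi/2})
               {\<theta> \<in> {-pi/2<..<pi/2}. CRB M N L P \<tau> \<alpha> s \<sigma> c3 \<theta> > \<epsilon>}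
            = (if x < 1 then 2 / pi * arcsin x else 1))"
proof -
  define Q where
    "Q = real L * (cmod c3)\<^sup>2 * P * \<tau> * real N * (cmod \<alpha>)\<^sup>2 * pi\<^sup>2 * real M * ((real M)\<^sup>2 - 1)"
  have "Q > 0"
    using assms one_less_real_square[OF assms(1)] by (simp add: Q_def)
  have crb: "CRB M N L P \<tau> \<alpha> s \<sigma> c3 \<theta> =
      6 * \<sigma>\<^sup>2 / (real L * (cmod c3)\<^sup>2 * P * \<tau> * real N * (cmod \<alpha>)\<^sup>2 * pi\<^sup>2
        * (cos \<theta>)\<^sup>2 * real M * ((real M)\<^sup>2 - 1))" if "\<theta> \<in> {-pi/2<..<pi/2}" for \<theta>
    using that assms cos_gt_zero_pi[of \<theta>] by (intro CRB_eq) auto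
  have crb_Q: "CRB M N L P \<tau> \<alpha> s \<sigma> c3 \<theta> = (sqrt 6 * \<sigma>)\<^sup>2 / (Q * (cos \<theta>)\<^sup>2)"
    if "\<theta> \<in> {-pi/2<..<pi/2}" for \<theta>
    unfolding crb[OF that] Q_def by (simp add: power_mult_distrib mult_ac)
  have times_Q: "\<epsilon> * real L * (cmod c3)\<^sup>2 * P * \<tau> * real N * (cmod \<alpha>)\<^sup>2 * pi\<^sup>2 * real M
      * ((real M)\<^sup>2 - 1) = \<epsilon> * Q" for \<epsilon>
    unfolding Q_def by (simp only: mult.assoc)
  show ?thesis
    unfolding Let_def times_Q
    by (intro conjI ballI allI impI crb measure_uniform_gt_inverse_cos_sq[OF _ \<open>Q > 0\<close> _ crb_Q])
      (use assms(8) in simp_all)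
qed

end
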